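(* The relation $\{(c(\alpha),c(\beta),c(\gamma)) \text{ padded with } 0 : \alpha,\beta,\gamma<\omega^\omega,\ \alpha+\beta=\gamma\}$ — more precisely, the set of triples of equal-length words over $\omega$ forming the components of $c(\alpha,\beta,\gamma)$ for ordinals $\alpha,\beta,\gamma<\omega^\omega$ with $\alpha+\beta=\gamma$ (ordinal addition) — is $(\omega;+)$-recognizable.
   Context: Ordinal encoding: every ordinal $0<\alpha<\omega^\omega$ can be written uniquely as $\alpha=\sum_{i=m}^{0}\omega^i a_i=\omega^m a_m+\cdots+\omega^0a_0$ with $a_i<\omega$ and $a_m\ne0$; put $c(\alpha)=a_0a_1\cdots a_m\in\omega^*$ (a word over the infinite alphabet $\omega$), and $c(0)=\varepsilon$. For ordinals $\alpha_1,\dots,\alpha_n<\omega^\omega$, $c(\alpha_1,\dots,\alpha_n)$ is the $n$-tuple of words obtained by right-padding each $c(\alpha_j)$ with the symbol $0$ to the common length $\max_j|c(\alpha_j)|$ (equivalently a single word over $\omega^n$). Recognizability: let $\mathfrak M=(\omega;+)$ with $+$ the ternary graph of addition, $\mathfrak L=\{+\}$. Let $\#\notin\omega$ and $\mathfrak M_\#$ the $\{+,P_\#\}$-structure with domain $\omega\cup\{\#\}$, $+$ as in $\mathfrak M$, $P_\#(x)$ iff $x=\#$. For $w=(w_1,\dots,w_n)\in(\omega^* )^n$, $\langle w\rangle$ is the word over $(\omega\cup\{\#\})^n$ of length $\max_i|w_i|$ obtained by right-padding each $w_i$ with $\#$ and reading in parallel. An $\mathfrak M$-automaton with $n$ tapes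 is $(Q,n,E,I,T)$ with $Q$ finite, $I,T\subseteq Q$, and a finite set $E\subseteq Q\times\mathcal F_n\times Q$, $\mathcal F_n$ the first-order $\{+,P_\#\}$-formulas with $n$ free variables; $w$ is accepted if, writing $\langle w\rangle=u_0\cdots u_{m-1}$, there are states $q_0\in I,\dots,q_m\in T$ such that for each $i<m$ some $(q_i,\varphi,q_{i+1})\in E$ satisfies $\mathfrak M_\#\models\varphi(u_i)$. A relation $X\subseteq(\omega^* )^n$ is $(\omega;+)$-recognizable if it is the set of tuples accepted by some such automaton. *)

theory Defs
  imports Main
begin

text \<open>An ordinal alpha < omega^omega, alpha = omega^m a_m + ... + omega^0 a_0 with a_m > 0,
  is represented by its code c(alpha) = a_0 a_1 ... a_m, a list of naturals whose last
  entry is nonzero; c(0) is the empty list.\<close>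

definition is_code :: "nat list \<Rightarrow> bool" where
  "is_code xs \<longleftrightarrow> xs = [] \<or> last xs \<noteq> 0"

definition coef :: "nat list \<Rightarrow> nat \<Rightarrow> nat" where
  "coef xs i = (if i < length xs then xs ! i else 0)"

text \<open>Ordinal addition on codes (standard Cantor normal form rule):
  if beta = 0 then alpha + beta = alpha; otherwise, with m the degree of beta,
  alpha + beta = sum_{i>m} omega^i a_i + omega^m (a_m + b_m) + sum_{i<m} omega^i b_i.\<close>

definition ord_add :: "nat list \<Rightarrow> nat list \<Rightarrow> nat list" where
  "ord_add a b =
     (if b = [] then a
      else (let m = length b - 1 in
            map (\<lambda>i. if i < m then b ! i
                      else if i = m then coef a m + b ! m
                      else a ! i) [0..<max (length a) (length b)]))"

definition pad0 :: "nat \<Rightarrow> nat list \<Rightarrow> nat list" where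
  "pad0 L xs = xs @ replicate (L - length xs) 0"

definition AddRel :: "nat list list set" where
  "AddRel = {[pad0 L a, pad0 L b, pad0 L c] | a b c L.
       is_code a \<and> is_code b \<and> is_code c \<and> ord_add a b = c \<and>
       L = max (length a) (max (length b) (length c))}"

text \<open>Variables are natural numbers. The domain of M_# is omega \<union> {#}, modelled as
  nat option with None = #.\<close>

datatype fm =
    FAdd nat nat nat
  | FHash nat
  | FEq nat nat
  | FNeg fm
  | FConj fm fm
  | FEx nat fm

fun sat :: "(nat \<Rightarrow> nat option) \<Rightarrow> fm \<Rightarrow> bool" where
  "sat e (FAdd x y z) = (\<exists>a b c. e x = Some a \<and> e y = Some b \<and> e z = Some c \<and> a + b = c)"
| "sat e (FHash x) = (e x = None)"
| "sat e (FEq x y) = (e x = e y)"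
| "sat e (FNeg \<phi>) = (\<not> sat e \<phi>)"
| "sat e (FConj \<phi> \<psi>) = (sat e \<phi> \<and> sat e \<psi>)"
| "sat e (FEx v \<phi>) = (\<exists>d. sat (e(v := d)) \<phi>)"

fun fv :: "fm \<Rightarrow> nat set" where
  "fv (FAdd x y z) = {x, y, z}"
| "fv (FHash x) = {x}"
| "fv (FEq x y) = {x, y}"
| "fv (FNeg \<phi>) = fv \<phi>"
| "fv (FConj \<phi> \<psi>) = fv \<phi> \<union> fv \<psi>"
| "fv (FEx v \<phi>) = fv \<phi> - {v}"

definition sat_letter :: "nat option list \<Rightarrow> fm \<Rightarrow> bool" where
  "sat_letter u \<phi> = sat (\<lambda>i. if i < length u then u ! i else None) \<phi>"

definition conv_len :: "nat list list \<Rightarrow> nat" where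
  "conv_len w = Max (set (0 # map length w))"

definition conv :: "nat list list \<Rightarrow> nat option list list" where
  "conv w = map (\<lambda>i. map (\<lambda>x. if i < length x then Some (x ! i) else None) w) [0..<conv_len w]"

text \<open>An (omega;+)-automaton with n tapes: states are natural numbers (Q is the finite set of
  states occurring in E, I, T), E a finite set of transitions labelled by formulas with free
  variables among the first n.\<close>

definition accepts ::
  "(nat \<times> fm \<times> nat) set \<Rightarrow> nat set \<Rightarrow> nat set \<Rightarrow> nat list list \<Rightarrow> bool" where
  "accepts E I T w \<longleftrightarrow>
     (let u = conv w in
      \<exists>qs. length qs = length u + 1 \<and> qs ! 0 \<in> I \<and> qs ! length u \<in> T \<and>
           (\<forall>i < length u. \<exists>\<phi>. (qs ! i, \<phi>, qs ! Suc i) \<in> E \<and> sat_letter (u ! i) \<phi>))"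

definition M_recognizable :: "nat \<Rightarrow> nat list list set \<Rightarrow> bool" where
  "M_recognizable n X \<longleftrightarrow>
     (\<exists>E I T. finite E \<and> finite I \<and> finite T \<and>
        (\<forall>(p, \<phi>, q) \<in> E. fv \<phi> \<subseteq> {..<n}) \<and>
        X = {w. length w = n \<and> accepts E I T w})"

end

theory Submission
  imports Defs "HOL-Library.More_List"
begin

(*
  In Cantor normal form, if \<beta> \<noteq> 0 has degree m, then \<alpha> + \<beta> has the coefficients of \<beta>
  below m, the sum \<alpha>\<^sub>m + \<beta>\<^sub>m at m, and the coefficients of \<alpha> above m; and \<alpha> + 0 = \<alpha>.
  Read from the least significant digit, the columns (\<alpha>\<^sub>i, \<beta>\<^sub>i, \<gamma>\<^sub>i) of a padded triple with
  \<alpha> + \<beta> = \<gamma> are therefore of the form (a, b, b), then one column (a, b, a + b) with b \<noteq> 0,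
  then columns (a, 0, a) -- or columns (a, 0, a) only; and since the common length is the
  maximal length of the three codes, the top column is not (0, 0, 0). Each of these column
  conditions is first-order over (\<omega>; +), so a finite automaton checks them all.
*)

section \<open>Codes and zero padding\<close>

abbreviation code_of :: "nat list \<Rightarrow> nat list" where
  "code_of \<equiv> strip_while ((=) 0)"

lemma coef_eq_nth_default: "coef = nth_default 0"
  by (simp add: fun_eq_iff coef_def nth_default_def)

lemma is_code_iff_no_trailing: "is_code xs \<longleftrightarrow> no_trailing ((=) 0) xs"
  by (auto simp: is_code_def no_trailing_unfold)

lemma last_eq_coef: "xs \<noteq> [] \<Longrightarrow> last xs = coef xs (length xs - 1)"
  by (simp add: coef_def last_conv_nth)

lemma code_eqI:
  assumes "is_code a" "is_code b" "\<And>i. coef a i = coef b i"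
  shows "a = b"
proof -
  have "strip_while ((=) 0) a = strip_while ((=) 0) b"
    using assms(3) by (simp add: nth_default_eq_iff [symmetric] coef_eq_nth_default fun_eq_iff)
  then show ?thesis
    using assms(1,2) by (simp add: is_code_iff_no_trailing)
qed

lemma is_code_code_of: "is_code (code_of x)"
  by (simp add: is_code_iff_no_trailing)

lemma coef_code_of [simp]: "coef (code_of x) = coef x"
  by (simp add: coef_eq_nth_default)

lemma length_pad0: "length a \<le> L \<Longrightarrow> length (pad0 L a) = L"
  by (simp add: pad0_def)

lemma nth_pad0: "length a \<le> L \<Longrightarrow> i < L \<Longrightarrow> pad0 L a ! i = coef a i"
  by (simp add: pad0_def coef_def nth_append)

lemma coef_pad0 [simp]: "coef (pad0 L a) = coef a"
  by (simp add: pad0_def coef_eq_nth_default)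

lemma pad0_code_of: "pad0 (length x) (code_of x) = x"
  by (rule nth_equalityI) (simp_all add: length_pad0 nth_pad0 length_strip_while_le coef_def)

lemma coef_ord_add:
  assumes "b \<noteq> []"
  shows "coef (ord_add a b) i =
    (if i < length b - 1 then coef b i else if i = length b - 1 then coef a i + coef b i else coef a i)"
  using assms by (cases b) (auto simp: ord_add_def coef_def Let_def)

lemma length_ord_add: "b \<noteq> [] \<Longrightarrow> length (ord_add a b) = max (length a) (length b)"
  by (simp add: ord_add_def Let_def)

lemma is_code_ord_add:
  assumes "is_code a" "is_code b"
  shows "is_code (ord_add a b)"
proof (cases "b = []")
  case True
  then show ?thesis using assms(1) by (simp add: ord_add_def)
next
  case False
  let ?n = "max (length a) (length b)"
  have "coef (ord_add a b) (?n - 1) \<noteq> 0"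
  proof (cases "length a \<le> length b")
    case True
    have "coef b (length b - 1) \<noteq> 0"
      using assms(2) False by (simp add: is_code_def last_eq_coef)
    then show ?thesis using True False by (simp add: coef_ord_add max_absorb2)
  next
    case a_longer: False
    then have "a \<noteq> []" by auto
    then have "coef a (length a - 1) \<noteq> 0"
      using assms(1) by (simp add: is_code_def last_eq_coef)
    moreover have "length b - 1 < length a - 1" using a_longer False by (cases b) auto
    ultimately show ?thesis using a_longer by (simp add: coef_ord_add[OF False])
  qed
  moreover have len: "length (ord_add a b) = ?n" using False by (rule length_ord_add)
  moreover have "ord_add a b \<noteq> []" using len False by auto
  ultimately show ?thesis by (simp add: is_code_def last_eq_coef)
qed

section \<open>Ordinal addition column by column\<close>

fun low_digit :: "nat \<times> nat \<times> nat \<Rightarrow> bool" where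
  "low_digit (a, b, c) \<longleftrightarrow> c = b"

fun lead_digit :: "nat \<times> nat \<times> nat \<Rightarrow> bool" where
  "lead_digit (a, b, c) \<longleftrightarrow> b \<noteq> 0 \<and> c = a + b"

fun high_digit :: "nat \<times> nat \<times> nat \<Rightarrow> bool" where
  "high_digit (a, b, c) \<longleftrightarrow> b = 0 \<and> c = a"

definition cnf_sum :: "(nat \<times> nat \<times> nat) list \<Rightarrow> bool" where
  "cnf_sum ts \<longleftrightarrow> (\<forall>t\<in>set ts. high_digit t) \<or>
     (\<exists>m<length ts. (\<forall>i<m. low_digit (ts ! i)) \<and> lead_digit (ts ! m) \<and>
        (\<forall>t\<in>set (drop (Suc m) ts). high_digit t))"

definition digit_triples :: "nat \<Rightarrow> nat list \<Rightarrow> nat list \<Rightarrow> nat list \<Rightarrow> (nat \<times> nat \<times> nat) list" where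
  "digit_triples L a b c = map (\<lambda>i. (coef a i, coef b i, coef c i)) [0..<L]"

lemma ord_add_eq_iff_cnf_sum:
  assumes codes: "is_code a" "is_code b" "is_code c"
    and lengths: "length a \<le> n" "length b \<le> n" "length c \<le> n"
  shows "ord_add a b = c \<longleftrightarrow> cnf_sum (digit_triples n a b c)"
    (is "_ \<longleftrightarrow> cnf_sum ?ts")
proof
  assume sum: "ord_add a b = c"
  show "cnf_sum ?ts"
  proof (cases "b = []")
    case True
    then show ?thesis using sum by (simp add: cnf_sum_def ord_add_def coef_def digit_triples_def)
  next
    case False
    let ?m = "length b - 1"
    have "coef b ?m \<noteq> 0" using codes(2) False by (simp add: is_code_def last_eq_coef)
    moreover have "coef b i = 0" if "?m < i" for i using that by (auto simp: coef_def)
    moreover have "?m < n" using False lengths(2) by (cases b) auto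
    ultimately show ?thesis
      using sum coef_ord_add[OF False] unfolding cnf_sum_def digit_triples_def
      by (intro disjI2 exI[of _ ?m]) (auto simp: drop_map)
  qed
next
  assume "cnf_sum ?ts"
  have beyond: "coef xs i = 0" if "length xs \<le> n" "n \<le> i" for xs i
    using that by (simp add: coef_def)
  then consider
      "\<forall>i. coef b i = 0 \<and> coef c i = coef a i"
    | m where "\<forall>i<m. coef c i = coef b i" "coef b m \<noteq> 0" "coef c m = coef a m + coef b m"
        "\<forall>i>m. coef b i = 0 \<and> coef c i = coef a i"
  proof (use \<open>cnf_sum ?ts\<close> in \<open>unfold cnf_sum_def, elim disjE exE conjE\<close>)
    assume "\<forall>t\<in>set ?ts. high_digit t"
    then have "coef b i = 0 \<and> coef c i = coef a i" for i
      using beyond lengths by (cases "i < n") (auto simp: digit_triples_def)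
    then show thesis using that(1) by blast
  next
    fix m assume "m < length ?ts" "\<forall>i<m. low_digit (?ts ! i)" "lead_digit (?ts ! m)"
      "\<forall>t\<in>set (drop (Suc m) ?ts). high_digit t"
    moreover have "coef b i = 0 \<and> coef c i = coef a i" if "m < i" for i
      using calculation beyond lengths that by (cases "i < n") (auto simp: digit_triples_def drop_map)
    ultimately show thesis using that(2)[of m] by (auto simp: digit_triples_def)
  qed
  then show "ord_add a b = c"
  proof cases
    case 1
    then have "b = []" "c = a"
      using codes by (auto intro!: code_eqI simp: is_code_def coef_def)
    then show ?thesis by (simp add: ord_add_def)
  next
    case (2 m)
    have "b \<noteq> []" using 2(2) by (auto simp: coef_def)
    have "length b - 1 = m"
    proof (rule antisym)
      show "m \<le> length b - 1" using 2(2) by (simp add: coef_def split: if_splits)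
      show "length b - 1 \<le> m"
        using 2(4) codes(2) \<open>b \<noteq> []\<close> by (metis is_code_def last_eq_coef not_le)
    qed
    then show ?thesis
      using 2 by (intro code_eqI is_code_ord_add codes) (simp add: coef_ord_add[OF \<open>b \<noteq> []\<close>])
  qed
qed

lemma zip_eq_digit_triples:
  "length y = length x \<Longrightarrow> length z = length x \<Longrightarrow> zip x (zip y z) = digit_triples (length x) x y z"
  by (rule nth_equalityI) (simp_all add: digit_triples_def coef_def)

lemma top_coef_ne_0_iff:
  assumes "is_code a" "length a \<le> L" "0 < L"
  shows "coef a (L - 1) \<noteq> 0 \<longleftrightarrow> length a = L"
  using assms by (auto simp: coef_def is_code_def last_eq_coef)

lemma ord_add_top_iff:
  assumes "is_code a" "is_code b" "is_code c"
  shows "ord_add a b = c \<and> L = max (length a) (max (length b) (length c)) \<longleftrightarrow>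
    length a \<le> L \<and> length b \<le> L \<and> length c \<le> L \<and>
    no_trailing ((=) (0, 0, 0)) (digit_triples L a b c) \<and> cnf_sum (digit_triples L a b c)"
proof -
  have "no_trailing ((=) (0, 0, 0)) (digit_triples L a b c) \<longleftrightarrow>
      L = 0 \<or> coef a (L - 1) \<noteq> 0 \<or> coef b (L - 1) \<noteq> 0 \<or> coef c (L - 1) \<noteq> 0"
    by (auto simp: digit_triples_def no_trailing_unfold last_map)
  moreover have "L = max (length a) (max (length b) (length c)) \<longleftrightarrow>
      length a \<le> L \<and> length b \<le> L \<and> length c \<le> L \<and>
      (L = 0 \<or> length a = L \<or> length b = L \<or> length c = L)"
    by auto
  ultimately have "L = max (length a) (max (length b) (length c)) \<longleftrightarrow>
      length a \<le> L \<and> length b \<le> L \<and> length c \<le> L \<and> no_trailing ((=) (0, 0, 0)) (digit_triples L a b c)"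
    using top_coef_ne_0_iff[OF assms(1), of L] top_coef_ne_0_iff[OF assms(2), of L]
      top_coef_ne_0_iff[OF assms(3), of L]
    by blast
  then show ?thesis
    using ord_add_eq_iff_cnf_sum[OF assms] by blast
qed

lemma AddRel_iff:
  "[x, y, z] \<in> AddRel \<longleftrightarrow> length y = length x \<and> length z = length x \<and>
     no_trailing ((=) (0, 0, 0)) (zip x (zip y z)) \<and> cnf_sum (zip x (zip y z))"
proof
  assume "[x, y, z] \<in> AddRel"
  then obtain a b c L where xyz: "x = pad0 L a" "y = pad0 L b" "z = pad0 L c"
    and codes: "is_code a" "is_code b" "is_code c"
    and sum: "ord_add a b = c \<and> L = max (length a) (max (length b) (length c))"
    unfolding AddRel_def by blast
  have "length x = L" "length y = L" "length z = L"
    using xyz sum by (simp_all add: length_pad0)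
  moreover have "digit_triples L x y z = digit_triples L a b c"
    using xyz by (simp add: digit_triples_def)
  moreover have "no_trailing ((=) (0, 0, 0)) (digit_triples L a b c) \<and> cnf_sum (digit_triples L a b c)"
    using sum ord_add_top_iff[OF codes] by blast
  ultimately show "length y = length x \<and> length z = length x \<and>
     no_trailing ((=) (0, 0, 0)) (zip x (zip y z)) \<and> cnf_sum (zip x (zip y z))"
    by (simp add: zip_eq_digit_triples)
next
  assume rhs: "length y = length x \<and> length z = length x \<and>
     no_trailing ((=) (0, 0, 0)) (zip x (zip y z)) \<and> cnf_sum (zip x (zip y z))"
  let ?L = "length x"
  have "digit_triples ?L (code_of x) (code_of y) (code_of z) = zip x (zip y z)"
    using rhs by (simp add: zip_eq_digit_triples digit_triples_def)
  then have "ord_add (code_of x) (code_of y) = code_of z \<and>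
      ?L = max (length (code_of x)) (max (length (code_of y)) (length (code_of z)))"
    using rhs length_strip_while_le[of "(=) 0" y] length_strip_while_le[of "(=) 0" z]
    by (subst ord_add_top_iff) (auto simp: is_code_code_of length_strip_while_le)
  moreover have "[x, y, z] = [pad0 ?L (code_of x), pad0 ?L (code_of y), pad0 ?L (code_of z)]"
    using rhs by (metis pad0_code_of)
  ultimately show "[x, y, z] \<in> AddRel"
    unfolding AddRel_def using is_code_code_of by blast
qed

section \<open>Runs of automata\<close>

fun accepts_from :: "(nat \<times> fm \<times> nat) set \<Rightarrow> nat set \<Rightarrow> nat \<Rightarrow> nat option list list \<Rightarrow> bool" where
  "accepts_from E T q [] \<longleftrightarrow> q \<in> T"
| "accepts_from E T q (u # us) \<longleftrightarrow> (\<exists>\<phi> q'. (q, \<phi>, q') \<in> E \<and> sat_letter u \<phi> \<and> accepts_from E T q' us)"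

definition is_run :: "(nat \<times> fm \<times> nat) set \<Rightarrow> nat set \<Rightarrow> nat option list list \<Rightarrow> nat list \<Rightarrow> bool" where
  "is_run E T us qs \<longleftrightarrow> length qs = length us + 1 \<and> qs ! length us \<in> T \<and>
     (\<forall>i<length us. \<exists>\<phi>. (qs ! i, \<phi>, qs ! Suc i) \<in> E \<and> sat_letter (us ! i) \<phi>)"

lemma ex_run_from:
  "(\<exists>qs. qs ! 0 = q \<and> is_run E T us qs) \<longleftrightarrow> (\<exists>qs. is_run E T us (q # qs))"
proof
  assume "\<exists>qs. qs ! 0 = q \<and> is_run E T us qs"
  then obtain qs where run: "qs ! 0 = q" "is_run E T us qs" by blast
  then have "qs = q # tl qs" by (cases qs) (auto simp: is_run_def)
  then show "\<exists>qs. is_run E T us (q # qs)" using run(2) by metis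
qed (metis nth_Cons_0)

lemma ex_run_Cons:
  "(\<exists>qs. is_run E T (u # us) (q # qs)) \<longleftrightarrow> (\<exists>q' qs. is_run E T (u # us) (q # q' # qs))"
proof
  assume "\<exists>qs. is_run E T (u # us) (q # qs)"
  then obtain qs where run: "is_run E T (u # us) (q # qs)" by blast
  then have "qs = hd qs # tl qs" by (cases qs) (auto simp: is_run_def)
  then show "\<exists>q' qs. is_run E T (u # us) (q # q' # qs)" using run by metis
qed blast

lemma is_run_Cons_Cons:
  "is_run E T (u # us) (q # q' # qs) \<longleftrightarrow>
     (\<exists>\<phi>. (q, \<phi>, q') \<in> E \<and> sat_letter u \<phi>) \<and> is_run E T us (q' # qs)"
  by (auto simp: is_run_def All_less_Suc2)

lemma ex_run_from_iff_accepts_from: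
  "(\<exists>qs. qs ! 0 = q \<and> is_run E T us qs) \<longleftrightarrow> accepts_from E T q us"
proof (induction us arbitrary: q)
  case Nil
  show ?case by (auto simp: is_run_def intro: exI[of _ "[q]"])
next
  case (Cons u us)
  show ?case
    unfolding ex_run_from ex_run_Cons is_run_Cons_Cons accepts_from.simps Cons.IH[symmetric] by blast
qed

lemma accepts_iff_accepts_from: "accepts E I T w \<longleftrightarrow> (\<exists>q\<in>I. accepts_from E T q (conv w))"
  unfolding accepts_def Let_def ex_run_from_iff_accepts_from[symmetric] is_run_def by blast

lemma accepts_last_letter:
  assumes "accepts E I T w" "conv w \<noteq> []"
  shows "\<exists>p \<phi> q. (p, \<phi>, q) \<in> E \<and> sat_letter (last (conv w)) \<phi>"
proof -
  obtain qs where "\<forall>i<length (conv w). \<exists>\<phi>. (qs ! i, \<phi>, qs ! Suc i) \<in> E \<and> sat_letter (conv w ! i) \<phi>"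
    using assms(1) unfolding accepts_def Let_def by blast
  then show ?thesis
    using assms(2) by (metis diff_less last_conv_nth length_greater_0_conv zero_less_one)
qed

lemma length_conv_letter: "u \<in> set (conv w) \<Longrightarrow> length u = length w"
  by (auto simp: conv_def)

lemma length_le_conv_len: "v \<in> set w \<Longrightarrow> length v \<le> conv_len w"
  by (simp add: conv_len_def)

lemma lengths_eq_conv_len:
  assumes "conv w \<noteq> [] \<Longrightarrow> None \<notin> set (last (conv w))" "v \<in> set w"
  shows "length v = conv_len w"
proof (cases "conv_len w = 0")
  case True
  then show ?thesis using length_le_conv_len[OF assms(2)] by simp
next
  case False
  then have "last (conv w) = map (\<lambda>x. if conv_len w - 1 < length x then Some (x ! (conv_len w - 1)) else None) w"
    by (simp add: conv_def last_map)
  then have "conv_len w - 1 < length v"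
    using False assms by (auto simp: conv_def split: if_splits)
  then show ?thesis using length_le_conv_len[OF assms(2)] by simp
qed

lemma accepts_lengths_eq:
  assumes "accepts E I T w"
    and no_hash: "\<And>p \<phi> q u. (p, \<phi>, q) \<in> E \<Longrightarrow> length u = length w \<Longrightarrow> sat_letter u \<phi> \<Longrightarrow> None \<notin> set u"
    and "v \<in> set w"
  shows "length v = conv_len w"
proof (rule lengths_eq_conv_len[OF _ \<open>v \<in> set w\<close>])
  assume "conv w \<noteq> []"
  then show "None \<notin> set (last (conv w))"
    using accepts_last_letter[OF assms(1)] no_hash length_conv_letter by (metis last_in_set)
qed

section \<open>The adder automaton\<close>

fun column_letter :: "nat \<times> nat \<times> nat \<Rightarrow> nat option list" where
  "column_letter (a, b, c) = [Some a, Some b, Some c]"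

lemma conv_eq_map_column_letter:
  "length y = length x \<Longrightarrow> length z = length x \<Longrightarrow> conv [x, y, z] = map column_letter (zip x (zip y z))"
  by (rule nth_equalityI) (simp_all add: conv_def conv_len_def)

definition num_fm :: "nat \<Rightarrow> fm" where
  "num_fm v = FNeg (FHash v)"

definition zero_fm :: "nat \<Rightarrow> fm" where
  "zero_fm v = FAdd v v v"

definition low_digit_fm :: fm where
  "low_digit_fm = FConj (num_fm 0) (FConj (num_fm 1) (FEq 2 1))"

definition lead_digit_fm :: fm where
  "lead_digit_fm = FConj (FAdd 0 1 2) (FNeg (zero_fm 1))"

definition high_nonzero_digit_fm :: fm where
  "high_nonzero_digit_fm = FConj (FAdd 0 1 2) (FConj (zero_fm 1) (FNeg (zero_fm 0)))"

definition zero_digit_fm :: fm where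
  "zero_digit_fm = FConj (zero_fm 0) (FConj (zero_fm 1) (zero_fm 2))"

lemmas digit_fm_defs = low_digit_fm_def lead_digit_fm_def high_nonzero_digit_fm_def zero_digit_fm_def
  num_fm_def zero_fm_def

lemma sat_column_letter_digit_fm [simp]:
  "sat_letter (column_letter t) low_digit_fm \<longleftrightarrow> low_digit t"
  "sat_letter (column_letter t) lead_digit_fm \<longleftrightarrow> lead_digit t"
  "sat_letter (column_letter t) high_nonzero_digit_fm \<longleftrightarrow> high_digit t \<and> t \<noteq> (0, 0, 0)"
  "sat_letter (column_letter t) zero_digit_fm \<longleftrightarrow> t = (0, 0, 0)"
  by (cases t; auto simp: sat_letter_def digit_fm_defs)+

(* State 0 reads the columns below the degree of \<beta>; states 1 and 2 read those above it,
   and record whether the last column read was nonzero (1) or zero (2). *)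
definition adder :: "(nat \<times> fm \<times> nat) set" where
  "adder = {(0, low_digit_fm, 0), (0, lead_digit_fm, 1),
            (1, high_nonzero_digit_fm, 1), (1, zero_digit_fm, 2),
            (2, high_nonzero_digit_fm, 1), (2, zero_digit_fm, 2)}"

lemma adder_no_hash:
  assumes "(p, \<phi>, q) \<in> adder" "length u = 3" "sat_letter u \<phi>"
  shows "None \<notin> set u"
proof -
  obtain a b c where "u = [a, b, c]"
    using assms(2) by (auto simp: numeral_3_eq_3 length_Suc_conv)
  then show ?thesis
    using assms(1,3) by (auto simp: adder_def sat_letter_def digit_fm_defs)
qed

lemma fv_adder: "\<forall>(p, \<phi>, q) \<in> adder. fv \<phi> \<subseteq> {..<3}"
  by (auto simp: adder_def digit_fm_defs)

lemma adder_transitions: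
  "(0, \<phi>, q') \<in> adder \<longleftrightarrow> \<phi> = low_digit_fm \<and> q' = 0 \<or> \<phi> = lead_digit_fm \<and> q' = 1"
  "q \<in> {1, 2} \<Longrightarrow> (q, \<phi>, q') \<in> adder \<longleftrightarrow>
     \<phi> = high_nonzero_digit_fm \<and> q' = 1 \<or> \<phi> = zero_digit_fm \<and> q' = 2"
  by (auto simp: adder_def)

lemma accepts_from_adder_Cons:
  "accepts_from adder {1} 0 (column_letter t # us) \<longleftrightarrow>
     low_digit t \<and> accepts_from adder {1} 0 us \<or> lead_digit t \<and> accepts_from adder {1} 1 us"
  "q \<in> {1, 2} \<Longrightarrow> accepts_from adder {1} q (column_letter t # us) \<longleftrightarrow>
     high_digit t \<and> t \<noteq> (0, 0, 0) \<and> accepts_from adder {1} 1 us \<or>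
     t = (0, 0, 0) \<and> accepts_from adder {1} 2 us"
  by (simp_all add: adder_transitions conj_disj_distribR ex_disj_distrib del: column_letter.simps)

lemma accepts_from_adder_high:
  assumes "q \<in> {1, 2}"
  shows "accepts_from adder {1} q (map column_letter ts) \<longleftrightarrow>
     (q = 2 \<longrightarrow> ts \<noteq> []) \<and> (\<forall>t\<in>set ts. high_digit t) \<and> no_trailing ((=) (0, 0, 0)) ts"
  using assms
proof (induction ts arbitrary: q)
  case (Cons t ts)
  have "accepts_from adder {1} q (map column_letter (t # ts)) \<longleftrightarrow>
      high_digit t \<and> t \<noteq> (0, 0, 0) \<and> accepts_from adder {1} 1 (map column_letter ts) \<or>
      t = (0, 0, 0) \<and> accepts_from adder {1} 2 (map column_letter ts)"
    by (simp only: list.map accepts_from_adder_Cons(2)[OF Cons.prems])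
  also have "\<dots> \<longleftrightarrow> (\<forall>t\<in>set (t # ts). high_digit t) \<and> no_trailing ((=) (0, 0, 0)) (t # ts)"
  proof -
    have "high_digit (0, 0, 0)" by simp
    moreover have "accepts_from adder {1} 1 (map column_letter ts) \<longleftrightarrow>
        (\<forall>t\<in>set ts. high_digit t) \<and> no_trailing ((=) (0, 0, 0)) ts"
      "accepts_from adder {1} 2 (map column_letter ts) \<longleftrightarrow>
        ts \<noteq> [] \<and> (\<forall>t\<in>set ts. high_digit t) \<and> no_trailing ((=) (0, 0, 0)) ts"
      using Cons.IH[of 1] Cons.IH[of 2] by simp_all
    ultimately show ?thesis by (simp only: no_trailing_Cons list.set ball_simps) blast
  qed
  finally show ?case by simp
qed auto

lemma accepts_from_adder_low:
  "accepts_from adder {1} 0 (map column_letter ts) \<longleftrightarrow>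
     (\<exists>m<length ts. (\<forall>i<m. low_digit (ts ! i)) \<and> lead_digit (ts ! m) \<and>
        (\<forall>t\<in>set (drop (Suc m) ts). high_digit t)) \<and> no_trailing ((=) (0, 0, 0)) ts"
proof (induction ts)
  case (Cons t ts)
  have "accepts_from adder {1} 0 (map column_letter (t # ts)) \<longleftrightarrow>
      low_digit t \<and> accepts_from adder {1} 0 (map column_letter ts) \<or>
      lead_digit t \<and> accepts_from adder {1} 1 (map column_letter ts)"
    by (simp only: list.map accepts_from_adder_Cons(1))
  moreover have "\<not> lead_digit (0, 0, 0)" by simp
  ultimately show ?case
    using Cons.IH accepts_from_adder_high[of 1 ts]
    by (auto simp: Ex_less_Suc2 All_less_Suc2)
qed simp

lemma accepts_adder_lengths:
  assumes "accepts adder {0, 1} {1} [x, y, z]"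
  shows "length y = length x \<and> length z = length x"
proof -
  have "None \<notin> set u"
    if "(p, \<phi>, q) \<in> adder" "length u = length [x, y, z]" "sat_letter u \<phi>" for p \<phi> q u
    using adder_no_hash that by simp
  then have "length v = conv_len [x, y, z]" if "v \<in> set [x, y, z]" for v
    using accepts_lengths_eq[OF assms _ that] by blast
  then show ?thesis by simp
qed

lemma accepts_adder_iff:
  assumes "length y = length x" "length z = length x"
  shows "accepts adder {0, 1} {1} [x, y, z] \<longleftrightarrow>
    no_trailing ((=) (0, 0, 0)) (zip x (zip y z)) \<and> cnf_sum (zip x (zip y z))"
  using accepts_from_adder_low accepts_from_adder_high[of 1]
  by (auto simp: accepts_iff_accepts_from conv_eq_map_column_letter[OF assms] cnf_sum_def)

theorem proposition5p6:
  shows "M_recognizable 3 AddRel"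
proof -
  have "AddRel = {w. length w = 3 \<and> accepts adder {0, 1} {1} w}"
  proof (intro set_eqI iffI)
    fix w assume "w \<in> AddRel"
    moreover obtain x y z where "w = [x, y, z]"
      using \<open>w \<in> AddRel\<close> unfolding AddRel_def by blast
    ultimately show "w \<in> {w. length w = 3 \<and> accepts adder {0, 1} {1} w}"
      using accepts_adder_iff[of y x z] by (simp add: AddRel_iff)
  next
    fix w assume "w \<in> {w. length w = 3 \<and> accepts adder {0, 1} {1} w}"
    then obtain x y z where w: "w = [x, y, z]" "accepts adder {0, 1} {1} [x, y, z]"
      by (auto simp: numeral_3_eq_3 length_Suc_conv)
    moreover have lens: "length y = length x" "length z = length x"
      using accepts_adder_lengths[OF w(2)] by simp_all
    ultimately show "w \<in> AddRel"
      using accepts_adder_iff[OF lens] by (simp add: AddRel_iff)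
  qed
  moreover have "finite adder" by (simp add: adder_def)
  ultimately show ?thesis
    unfolding M_recognizable_def using fv_adder
    by (intro exI[of _ adder] exI[of _ "{0, 1}"] exI[of _ "{1}"]) blast
qed

end
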